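(* Let $X\subseteq V_\Delta$ be finite such that $G_X$ is connected and $X$ has no holes. Let $P$ be a portal (for some axis) and let $u,v\in X\setminus P$. A shortest path from $u$ to $v$ in $G_X$ traverses (contains a node of) $P$ if and only if $u$ and $v$ are not in the same connected component of the subgraph of $G_X$ induced by $X\setminus P$.
   Context: $G_\Delta=(V_\Delta,E_\Delta)$ is the infinite regular triangular grid graph; its edges are parallel to one of three axes $x,y,z$. For finite $X\subseteq V_\Delta$, $G_X$ is the subgraph of $G_\Delta$ induced by $X$; $X$ has no holes if the subgraph of $G_\Delta$ induced by $V_\Delta\setminus X$ is connected. For an axis $d$, let $E_d$ be the set of edges of $G_X$ parallel to $d$; the $d$-portals are the vertex sets of the connected components of $(X,E_d)$. A portal is a $d$-portal for some axis $d$. *)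

theory Defs
  imports Main
begin

text \<open>Vertices of the regular triangular grid in axial coordinates:
  each vertex is a pair of integers; the three axes have direction vectors
  (1,0), (0,1) and (1,-1).\<close>

type_synonym tvertex = "int \<times> int"

datatype axis = AxX | AxY | AxZ

fun axis_dir :: "axis \<Rightarrow> int \<times> int" where
  "axis_dir AxX = (1, 0)"
| "axis_dir AxY = (0, 1)"
| "axis_dir AxZ = (1, -1)"

definition adj_axis :: "axis \<Rightarrow> tvertex \<Rightarrow> tvertex \<Rightarrow> bool" where
  "adj_axis d a b \<longleftrightarrow>
     (fst b - fst a, snd b - snd a) = axis_dir d \<or>
     (fst a - fst b, snd a - snd b) = axis_dir d"

definition tadj :: "tvertex \<Rightarrow> tvertex \<Rightarrow> bool" where
  "tadj a b \<longleftrightarrow> (\<exists>d. adj_axis d a b)"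

definition connected_in :: "(tvertex \<Rightarrow> tvertex \<Rightarrow> bool) \<Rightarrow> tvertex set \<Rightarrow> tvertex \<Rightarrow> tvertex \<Rightarrow> bool" where
  "connected_in E S a b \<longleftrightarrow> a \<in> S \<and> b \<in> S \<and> (\<lambda>x y. x \<in> S \<and> y \<in> S \<and> E x y)\<^sup>*\<^sup>* a b"

definition graph_connected :: "tvertex set \<Rightarrow> bool" where
  "graph_connected S \<longleftrightarrow> (\<forall>a\<in>S. \<forall>b\<in>S. connected_in tadj S a b)"

definition no_holes :: "tvertex set \<Rightarrow> bool" where
  "no_holes X \<longleftrightarrow> graph_connected (- X)"

definition is_portal :: "tvertex set \<Rightarrow> tvertex set \<Rightarrow> bool" where
  "is_portal X P \<longleftrightarrow> (\<exists>d. \<exists>a\<in>X. P = {b. connected_in (adj_axis d) X a b})"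

definition is_walk :: "tvertex set \<Rightarrow> tvertex list \<Rightarrow> tvertex \<Rightarrow> tvertex \<Rightarrow> bool" where
  "is_walk S p u v \<longleftrightarrow> p \<noteq> [] \<and> hd p = u \<and> last p = v \<and> set p \<subseteq> S \<and>
     (\<forall>i. Suc i < length p \<longrightarrow> tadj (p ! i) (p ! Suc i))"

definition is_shortest_path :: "tvertex set \<Rightarrow> tvertex list \<Rightarrow> tvertex \<Rightarrow> tvertex \<Rightarrow> bool" where
  "is_shortest_path S p u v \<longleftrightarrow> is_walk S p u v \<and>
     (\<forall>q. is_walk S q u v \<longrightarrow> length p \<le> length q)"

end

theory Submission
  imports Defs
begin

text \<open>Choose coordinates in which the axis of the portal \<open>P\<close> is horizontal: \<open>P\<close> becomes a maximal
  horizontal segment of \<open>X\<close>, and both vertices extending it lie outside \<open>X\<close>. Suppose a shortest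
  path enters \<open>P\<close> although its ends are connected in \<open>X - P\<close>. Let \<open>al\<close> and \<open>be\<close> be the vertices
  just before its first and just after its last visit of \<open>P\<close>; they are joined by a detour avoiding
  \<open>P\<close>, which closes up through \<open>P\<close> to a closed walk in \<open>X\<close>. As \<open>X\<close> has no holes, this walk winds
  an even number of times around every vertex outside \<open>X\<close>. For the two ends of \<open>P\<close> this puts \<open>al\<close>
  and \<open>be\<close> on the same side of \<open>P\<close>; for the vertices of that side it shows that the whole row from
  \<open>al\<close> to \<open>be\<close> lies in \<open>X\<close>. That row is shorter than the section of the path from \<open>al\<close> to \<open>be\<close>,
  contradicting minimality.\<close>

lemma tadj_iff: "tadj a b \<longleftrightarrow> adj_axis AxX a b \<or> adj_axis AxY a b \<or> adj_axis AxZ a b"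
  unfolding tadj_def by (metis axis.exhaust)

lemma tadj_sym: "tadj a b \<Longrightarrow> tadj b a"
  unfolding tadj_iff adj_axis_def by auto

lemma is_walk_iff:
  "is_walk S p u v \<longleftrightarrow> p \<noteq> [] \<and> hd p = u \<and> last p = v \<and> set p \<subseteq> S \<and> successively tadj p"
  unfolding is_walk_def successively_conv_nth by blast

lemma is_walk_ends_mem:
  assumes "is_walk S p u v" shows "u \<in> S" "v \<in> S"
  using assms hd_in_set last_in_set unfolding is_walk_iff by blast+

lemma is_walk_rev: "is_walk S p u v \<Longrightarrow> is_walk S (rev p) v u"
  unfolding is_walk_iff by (auto simp: hd_rev last_rev elim: successively_mono intro: tadj_sym)

lemma is_walk_join: "is_walk S p u v \<Longrightarrow> is_walk S q v w \<Longrightarrow> is_walk S (p @ tl q) u w"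
  unfolding is_walk_iff by (cases q) (auto simp: successively_append_iff successively_Cons)

lemma is_walk_mono: "is_walk S p u v \<Longrightarrow> S \<subseteq> T \<Longrightarrow> is_walk T p u v"
  unfolding is_walk_iff by blast

lemma is_walk_appendD:
  assumes "is_walk S (p @ q) u v" "p \<noteq> []" "q \<noteq> []"
  shows "is_walk S p u (last p)" "is_walk S q (hd q) v" "tadj (last p) (hd q)"
  using assms unfolding is_walk_iff by (auto simp: successively_append_iff)

lemma connected_in_iff_walk: "connected_in tadj S a b \<longleftrightarrow> (\<exists>p. is_walk S p a b)"
proof
  assume "connected_in tadj S a b"
  then have "(\<lambda>x y. x \<in> S \<and> y \<in> S \<and> tadj x y)\<^sup>*\<^sup>* a b" "a \<in> S"
    unfolding connected_in_def by auto
  then show "\<exists>p. is_walk S p a b"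
  proof (induction rule: rtranclp_induct)
    case base
    then have "is_walk S [a] a a" by (simp add: is_walk_iff)
    then show ?case ..
  next
    case (step y z)
    then obtain p where "is_walk S p a y" by blast
    moreover have "is_walk S [y, z] y z" using step by (simp add: is_walk_iff)
    ultimately show ?case by (blast intro: is_walk_join)
  qed
next
  assume "\<exists>p. is_walk S p a b"
  then obtain p where "is_walk S p a b" ..
  then show "connected_in tadj S a b"
  proof (induction p arbitrary: a)
    case (Cons x p)
    show ?case
    proof (cases p)
      case Nil
      then show ?thesis using Cons.prems by (auto simp: is_walk_iff connected_in_def)
    next
      case (Cons y r)
      with Cons.prems have "is_walk S p y b" "a \<in> S" "y \<in> S" "tadj a y"
        by (auto simp: is_walk_iff)
      moreover from this(1) have "connected_in tadj S y b" by (rule Cons.IH)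
      ultimately show ?thesis
        unfolding connected_in_def by (auto intro: converse_rtranclp_into_rtranclp)
    qed
  qed (simp add: is_walk_iff)
qed

fun edge_count :: "('a \<Rightarrow> 'a \<Rightarrow> bool) \<Rightarrow> 'a list \<Rightarrow> nat" where
  "edge_count f (x # y # zs) = of_bool (f x y) + edge_count f (y # zs)"
| "edge_count f _ = 0"

lemma edge_count_Cons: "edge_count f (x # ys) = of_bool (ys \<noteq> [] \<and> f x (hd ys)) + edge_count f ys"
  by (cases ys) auto

lemma edge_count_append:
  "edge_count f (xs @ ys) =
     edge_count f xs + edge_count f ys + of_bool (xs \<noteq> [] \<and> ys \<noteq> [] \<and> f (last xs) (hd ys))"
  by (induction f xs rule: edge_count.induct) (auto simp: edge_count_Cons)

lemma edge_count_cong: "successively (\<lambda>a b. f a b = g a b) xs \<Longrightarrow> edge_count f xs = edge_count g xs"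
  by (induction f xs rule: edge_count.induct) auto

lemma edge_count_eq_0: "successively (\<lambda>a b. \<not> f a b) xs \<Longrightarrow> edge_count f xs = 0"
  by (induction f xs rule: edge_count.induct) auto

lemma even_edge_count_xor:
  "successively (\<lambda>a b. f a b = (g a b \<noteq> h a b)) xs \<Longrightarrow>
     even (edge_count f xs) \<longleftrightarrow> even (edge_count g xs + edge_count h xs)"
  by (induction f xs rule: edge_count.induct) auto

lemma even_edge_count_boundary:
  "xs \<noteq> [] \<Longrightarrow>
     even (edge_count (\<lambda>a b. (a \<in> A) \<noteq> (b \<in> A)) xs) \<longleftrightarrow> (hd xs \<in> A \<longleftrightarrow> last xs \<in> A)"
  by (induction "\<lambda>a b. (a \<in> A) \<noteq> (b \<in> A)" xs rule: edge_count.induct) auto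

lemma split_list_first_last:
  assumes "set xs \<inter> A \<noteq> {}"
  obtains ys zs ws where "xs = ys @ zs @ ws" "set ys \<inter> A = {}" "set ws \<inter> A = {}"
    "zs \<noteq> []" "hd zs \<in> A" "last zs \<in> A"
proof -
  obtain ys x rest where xs: "xs = ys @ x # rest" "x \<in> A" "\<forall>y\<in>set ys. y \<notin> A"
    using assms split_list_first_propE[of xs "\<lambda>x. x \<in> A"] by blast
  then have "\<exists>z\<in>set (x # rest). z \<in> A" by simp
  then obtain ms y ws where rest: "x # rest = ms @ y # ws" "y \<in> A" "\<forall>z\<in>set ws. z \<notin> A"
    by (rule split_list_last_propE)
  then have "hd (ms @ [y]) = x" by (cases ms) auto
  with xs rest show thesis
    by (intro that[of ys "ms @ [y]" ws]) auto
qed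

lemma is_walk_split_at_set:
  assumes p: "is_walk X p u v" and "u \<notin> P" "v \<notin> P" "set p \<inter> P \<noteq> {}"
  obtains pre mid suf where "p = pre @ mid @ suf"
    "is_walk (X - P) pre u (last pre)" "is_walk X mid (hd mid) (last mid)"
    "is_walk (X - P) suf (hd suf) v" "hd mid \<in> P" "last mid \<in> P"
    "tadj (last pre) (hd mid)" "tadj (last mid) (hd suf)"
proof -
  obtain pre mid suf where p_split: "p = pre @ mid @ suf"
    and "set pre \<inter> P = {}" "set suf \<inter> P = {}" and mid: "mid \<noteq> []" "hd mid \<in> P" "last mid \<in> P"
    using split_list_first_last[OF assms(4)] .
  have "pre \<noteq> []" "suf \<noteq> []"
    using p p_split mid \<open>u \<notin> P\<close> \<open>v \<notin> P\<close> by (auto simp: is_walk_iff)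
  have pre: "is_walk X pre u (last pre)" and rest: "is_walk X (mid @ suf) (hd mid) v"
    and "tadj (last pre) (hd mid)"
    using is_walk_appendD[of X pre "mid @ suf"] p p_split \<open>pre \<noteq> []\<close> mid(1) by auto
  have "is_walk X mid (hd mid) (last mid)" and suf: "is_walk X suf (hd suf) v"
    and "tadj (last mid) (hd suf)"
    using is_walk_appendD[OF rest mid(1) \<open>suf \<noteq> []\<close>] by auto
  moreover have "is_walk (X - P) pre u (last pre)" "is_walk (X - P) suf (hd suf) v"
    using pre suf \<open>set pre \<inter> P = {}\<close> \<open>set suf \<inter> P = {}\<close> by (auto simp: is_walk_iff)
  ultimately show thesis
    using that[OF p_split] mid(2,3) \<open>tadj (last pre) (hd mid)\<close> by blast
qed

lemma rtranclp_intermediate_value: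
  fixes f :: "'a \<Rightarrow> int"
  assumes "r\<^sup>*\<^sup>* a b" and step: "\<And>x y. r x y \<Longrightarrow> \<bar>f x - f y\<bar> \<le> 1"
    and "min (f a) (f b) \<le> k" "k \<le> max (f a) (f b)"
  shows "\<exists>y. r\<^sup>*\<^sup>* a y \<and> f y = k"
  using assms(1,3,4)
proof (induction rule: rtranclp_induct)
  case (step y z)
  show ?case
  proof (cases "k = f z")
    case True
    with step.hyps show ?thesis by (blast intro: rtranclp.rtrancl_into_rtrancl)
  next
    case False
    with step.prems step.hyps(2)[THEN assms(2)] show ?thesis
      by (intro step.IH) auto
  qed
qed auto

text \<open>Sheared coordinates on the grid: \<open>L z\<close> is the level (row) of \<open>z\<close>, \<open>t z\<close> its position in the row.\<close>

locale grid_frame =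
  fixes L t :: "tvertex \<Rightarrow> int" and pt :: "int \<Rightarrow> int \<Rightarrow> tvertex"
  assumes L_pt [simp]: "L (pt l k) = l" and t_pt [simp]: "t (pt l k) = k"
    and pt_L_t [simp]: "pt (L z) (t z) = z"
    and tadj_coords: "tadj a b \<longleftrightarrow>
      L a = L b \<and> \<bar>t a - t b\<bar> = 1 \<or>
      L b = L a + 1 \<and> (t b = t a \<or> t b = t a - 1) \<or>
      L a = L b + 1 \<and> (t a = t b \<or> t a = t b - 1)"
begin

lemma vertex_eq_iff: "a = b \<longleftrightarrow> L a = L b \<and> t a = t b"
  by (metis pt_L_t)

lemma grid_frame_neg: "grid_frame (\<lambda>z. - L z) (\<lambda>z. - t z) (\<lambda>l k. pt (- l) (- k))"
  by unfold_locales (auto simp: tadj_coords)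

lemma walk_t_diff_le: "is_walk S p a b \<Longrightarrow> \<bar>t a - t b\<bar> \<le> int (length p) - 1"
proof (induction p arbitrary: a)
  case (Cons x p)
  show ?case
  proof (cases p)
    case (Cons y r)
    with Cons.prems have "is_walk S p y b" "tadj a y" by (auto simp: is_walk_iff)
    with Cons.IH have "\<bar>t y - t b\<bar> \<le> int (length p) - 1" "\<bar>t a - t y\<bar> \<le> 1"
      by (auto simp: tadj_coords)
    then show ?thesis by simp
  qed (use Cons.prems in \<open>auto simp: is_walk_iff\<close>)
qed (simp add: is_walk_iff)

definition row_between :: "tvertex \<Rightarrow> tvertex \<Rightarrow> tvertex list" where
  "row_between a b = map (pt (L a)) (if t a \<le> t b then [t a..t b] else rev [t b..t a])"

lemma length_row_between: "length (row_between a b) = nat \<bar>t a - t b\<bar> + 1"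
  unfolding row_between_def by auto

lemma is_walk_row_between:
  assumes "L b = L a"
    and row: "\<And>y. L y = L a \<Longrightarrow> min (t a) (t b) \<le> t y \<Longrightarrow> t y \<le> max (t a) (t b) \<Longrightarrow> y \<in> S"
  shows "is_walk S (row_between a b) a b"
proof -
  have consecutive: "successively (\<lambda>x y. y = x + 1) [i..j]" for i j :: int
    by (simp add: successively_conv_nth)
  have "tadj (pt l k) (pt l (k + 1))" "tadj (pt l (k + 1)) (pt l k)" for l k
    by (auto simp: tadj_coords)
  then have "successively tadj (row_between a b)"
    unfolding row_between_def successively_map by (auto intro!: successively_mono[OF consecutive])
  moreover have "hd [i..j] = i" "last [i..j] = j" if "i \<le> j" for i j :: int
    using upto_rec1[OF that] upto_rec2[OF that] by (metis list.sel(1), metis last_snoc)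
  then have "hd (row_between a b) = a" "last (row_between a b) = b"
    using pt_L_t[of b] \<open>L b = L a\<close> by (simp_all add: row_between_def hd_map last_map hd_rev last_rev)
  moreover have "set (row_between a b) \<subseteq> S"
    using row[of "pt (L a) _"] by (auto simp: row_between_def)
  ultimately show ?thesis
    by (simp add: is_walk_iff row_between_def)
qed

text \<open>The edges met by a ray leaving \<open>w\<close> to the right between levels \<open>L w\<close> and \<open>L w + 1\<close>.
  Along a closed walk, the parity of their number is a discrete winding number around \<open>w\<close>.\<close>

definition crosses_ray :: "tvertex \<Rightarrow> tvertex \<Rightarrow> tvertex \<Rightarrow> bool" where
  "crosses_ray w a b \<longleftrightarrow>
     L a = L w \<and> L b = L w + 1 \<and> t w < t a \<or> L b = L w \<and> L a = L w + 1 \<and> t w < t b"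

lemma edge_count_crosses_ray_shift:
  assumes "successively tadj g" "w' \<notin> set g" "L w' = L w" "t w' = t w + 1"
  shows "edge_count (crosses_ray w) g = edge_count (crosses_ray w') g"
proof (rule edge_count_cong)
  have "crosses_ray w a b = crosses_ray w' a b" if "tadj a b" "a \<noteq> w'" "b \<noteq> w'" for a b
  proof -
    have "\<not> (L a = L w' \<and> t a = t w')" "\<not> (L b = L w' \<and> t b = t w')"
      using that(2,3) by (simp_all flip: vertex_eq_iff)
    then show ?thesis
      using that(1)[unfolded tadj_coords] assms(3,4) unfolding crosses_ray_def by smt
  qed
  then show "successively (\<lambda>a b. crosses_ray w a b = crosses_ray w' a b) g"
    using assms(1,2) by (auto elim!: successively_mono)
qed

lemma even_crosses_ray_up:
  assumes g: "is_walk S g x x" and "w \<notin> set g" "L w = L w0 + 1"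
    and "t w = t w0 \<or> t w = t w0 - 1 \<and> w0 \<notin> set g"
  shows "even (edge_count (crosses_ray w0) g) \<longleftrightarrow> even (edge_count (crosses_ray w) g)"
proof -
  \<comment> \<open>The crossings of the two rays together form the edge boundary of the half-row \<open>H\<close>.\<close>
  define H where "H = {z. L z = L w \<and> t w0 \<le> t z}"
  have "((a \<in> H) \<noteq> (b \<in> H)) = (crosses_ray w a b \<noteq> crosses_ray w0 a b)"
    if "tadj a b" "a \<in> set g" "b \<in> set g" for a b
  proof -
    have "\<not> (L a = L w \<and> t a = t w)" "\<not> (L b = L w \<and> t b = t w)"
      "t w = t w0 - 1 \<Longrightarrow> \<not> (L a = L w0 \<and> t a = t w0) \<and> \<not> (L b = L w0 \<and> t b = t w0)"
      using that(2,3) assms(2,4) by (auto simp flip: vertex_eq_iff)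
    moreover have "t w = t w0 \<or> t w = t w0 - 1" using assms(4) by blast
    ultimately show ?thesis
      using that(1)[unfolded tadj_coords] assms(3) unfolding H_def crosses_ray_def mem_Collect_eq by smt
  qed
  then have "successively (\<lambda>a b. ((a \<in> H) \<noteq> (b \<in> H)) = (crosses_ray w a b \<noteq> crosses_ray w0 a b)) g"
    using g unfolding is_walk_iff by (auto elim!: successively_mono)
  then have "even (edge_count (\<lambda>a b. (a \<in> H) \<noteq> (b \<in> H)) g) \<longleftrightarrow>
      even (edge_count (crosses_ray w) g + edge_count (crosses_ray w0) g)"
    by (rule even_edge_count_xor)
  moreover have "even (edge_count (\<lambda>a b. (a \<in> H) \<noteq> (b \<in> H)) g)"
    using g even_edge_count_boundary unfolding is_walk_iff by metis
  ultimately show ?thesis by auto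
qed

lemma even_crosses_ray_adjacent:
  assumes g: "is_walk S g x x" and "w \<notin> set g" "w' \<notin> set g" "tadj w w'"
  shows "even (edge_count (crosses_ray w) g) \<longleftrightarrow> even (edge_count (crosses_ray w') g)"
proof -
  have succ: "successively tadj g" using g by (simp add: is_walk_iff)
  from assms(4) consider
      "L w' = L w" "t w' = t w + 1" | "L w = L w'" "t w = t w' + 1"
    | "L w' = L w + 1" "t w' = t w \<or> t w' = t w - 1"
    | "L w = L w' + 1" "t w = t w' \<or> t w = t w' - 1"
    unfolding tadj_coords by linarith
  then show ?thesis
  proof cases
    case 1
    then show ?thesis using edge_count_crosses_ray_shift[OF succ assms(3)] by simp
  next
    case 2
    then show ?thesis using edge_count_crosses_ray_shift[OF succ assms(2)] by simp
  next
    case 3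
    then show ?thesis using even_crosses_ray_up[OF g assms(3)] assms(2) by blast
  next
    case 4
    then show ?thesis using even_crosses_ray_up[OF g assms(2)] assms(3) by blast
  qed
qed

lemma even_crosses_ray_outside:
  assumes X: "finite X" "no_holes X" and g: "is_walk X g x x" and "w \<notin> X"
  shows "even (edge_count (crosses_ray w) g)"
proof -
  define M where "M = Max (insert 0 (L ` X)) + 1"
  have below: "L z < M" if "z \<in> X" for z
    using that X(1) by (simp add: M_def Max_ge_iff)
  \<comment> \<open>Without holes, \<open>w\<close> is joined outside \<open>X\<close> to a vertex above \<open>X\<close>, whose ray misses \<open>g\<close>.\<close>
  define far where "far = pt M 0"
  have "far \<notin> X" using below[of far] by (auto simp: far_def)
  then have "(\<lambda>a b. a \<in> - X \<and> b \<in> - X \<and> tadj a b)\<^sup>*\<^sup>* w far"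
    using X(2) \<open>w \<notin> X\<close> unfolding no_holes_def graph_connected_def connected_in_def by blast
  then have "even (edge_count (crosses_ray w) g) \<longleftrightarrow> even (edge_count (crosses_ray far) g)"
  proof (induction rule: rtranclp_induct)
    case (step y z)
    then show ?case
      using even_crosses_ray_adjacent[OF g, of y z] g by (auto simp: is_walk_iff)
  qed simp
  moreover have "edge_count (crosses_ray far) g = 0"
  proof (rule edge_count_eq_0)
    show "successively (\<lambda>a b. \<not> crosses_ray far a b) g"
      using g below by (auto simp: is_walk_iff crosses_ray_def far_def elim!: successively_mono)
  qed
  ultimately show ?thesis by simp
qed

end

locale axis_frame = grid_frame +
  fixes d :: axis
  assumes adj_axis_coords: "adj_axis d a b \<longleftrightarrow> L a = L b \<and> \<bar>t a - t b\<bar> = 1"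

lemma axis_frame_exists: "\<exists>L t pt. axis_frame L t pt d"
proof (cases d)
  case AxX
  have "axis_frame snd fst (\<lambda>l k. (k, l)) AxX"
    by unfold_locales (auto simp: tadj_iff adj_axis_def abs_if)
  with AxX show ?thesis by blast
next
  case AxY
  have "axis_frame fst snd (\<lambda>l k. (l, k)) AxY"
    by unfold_locales (auto simp: tadj_iff adj_axis_def abs_if)
  with AxY show ?thesis by blast
next
  case AxZ
  have "axis_frame (\<lambda>z. fst z + snd z) (\<lambda>z. - snd z) (\<lambda>l k. (l + k, - k)) AxZ"
    by unfold_locales (auto simp: tadj_iff adj_axis_def abs_if)
  with AxZ show ?thesis by blast
qed

lemma (in axis_frame) axis_component:
  assumes "a0 \<in> X" and P_def: "P = {b. connected_in (adj_axis d) X a0 b}"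
  shows "a0 \<in> P" "P \<subseteq> X" "\<And>b. b \<in> P \<Longrightarrow> L b = L a0"
    and "\<And>b k. b \<in> P \<Longrightarrow> min (t a0) (t b) \<le> k \<Longrightarrow> k \<le> max (t a0) (t b) \<Longrightarrow> pt (L a0) k \<in> P"
    and "\<And>b y. b \<in> P \<Longrightarrow> y \<in> X \<Longrightarrow> adj_axis d b y \<Longrightarrow> y \<in> P"
proof -
  define R where "R = (\<lambda>x y. x \<in> X \<and> y \<in> X \<and> adj_axis d x y)"
  have in_X: "b \<in> X" if "R\<^sup>*\<^sup>* a0 b" for b
    using that \<open>a0 \<in> X\<close> by (induction rule: rtranclp_induct) (auto simp: R_def)
  have mem: "b \<in> P \<longleftrightarrow> R\<^sup>*\<^sup>* a0 b" for b
    using in_X \<open>a0 \<in> X\<close> unfolding P_def connected_in_def R_def[symmetric] by blast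
  have level: "L b = L a0" if "R\<^sup>*\<^sup>* a0 b" for b
    using that by (induction rule: rtranclp_induct) (auto simp: R_def adj_axis_coords)
  show "a0 \<in> P" "P \<subseteq> X" "\<And>b. b \<in> P \<Longrightarrow> L b = L a0"
    using mem in_X level by blast+
  show "pt (L a0) k \<in> P"
    if b: "b \<in> P" and k: "min (t a0) (t b) \<le> k" "k \<le> max (t a0) (t b)" for b k
  proof -
    have "R\<^sup>*\<^sup>* a0 b" using b mem by blast
    moreover have step: "\<bar>t x - t y\<bar> \<le> 1" if "R x y" for x y
      using that by (simp add: R_def adj_axis_coords)
    ultimately obtain y where "R\<^sup>*\<^sup>* a0 y" "t y = k"
      using rtranclp_intermediate_value[OF _ step k] by blast
    moreover from this have "pt (L a0) k = y" using level[of y] pt_L_t[of y] by simp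
    ultimately show ?thesis using mem by simp
  qed
  show "y \<in> P" if "b \<in> P" "y \<in> X" "adj_axis d b y" for b y
  proof -
    have "b \<in> X" using that(1) mem in_X by blast
    with that(2,3) have "R b y" unfolding R_def by blast
    with that(1) show ?thesis using mem by (meson rtranclp.rtrancl_into_rtrancl)
  qed
qed

locale portal_segment = grid_frame +
  fixes X P :: "tvertex set" and c lo hi :: int
  assumes finite_X: "finite X" and no_holes_X: "no_holes X"
    and mem_P: "z \<in> P \<longleftrightarrow> L z = c \<and> lo \<le> t z \<and> t z \<le> hi"
    and P_subset_X: "P \<subseteq> X"
    and lo_end_notin: "pt c (lo - 1) \<notin> X" and hi_end_notin: "pt c (hi + 1) \<notin> X"

lemma (in axis_frame) portal_segment_exists:
  assumes X: "finite X" "no_holes X" and "a0 \<in> X"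
    and P_def: "P = {b. connected_in (adj_axis d) X a0 b}"
  shows "\<exists>c lo hi. portal_segment L t pt X P c lo hi"
proof -
  note P = axis_component[OF \<open>a0 \<in> X\<close> P_def]
  have "finite (t ` P)" using P(2) X(1) by (auto intro: finite_subset)
  define lo where "lo = Min (t ` P)"
  define hi where "hi = Max (t ` P)"
  have "lo \<in> t ` P" "hi \<in> t ` P"
    using \<open>finite (t ` P)\<close> P(1) unfolding lo_def hi_def by (auto intro: Min_in Max_in)
  then obtain blo bhi where blo: "blo \<in> P" "t blo = lo" and bhi: "bhi \<in> P" "t bhi = hi"
    by blast
  have bounds: "lo \<le> t z" "t z \<le> hi" if "z \<in> P" for z
    using that \<open>finite (t ` P)\<close> by (simp_all add: lo_def hi_def)
  have interval: "z \<in> P \<longleftrightarrow> L z = L a0 \<and> lo \<le> t z \<and> t z \<le> hi" for z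
  proof
    show "z \<in> P \<Longrightarrow> L z = L a0 \<and> lo \<le> t z \<and> t z \<le> hi"
      using P(3) bounds by blast
  next
    assume z: "L z = L a0 \<and> lo \<le> t z \<and> t z \<le> hi"
    then have "pt (L a0) (t z) \<in> P"
      using P(4)[OF blo(1), of "t z"] P(4)[OF bhi(1), of "t z"] blo(2) bhi(2) bounds[OF P(1)]
      by (cases "t z \<le> t a0") auto
    with z show "z \<in> P" by (metis pt_L_t)
  qed
  have "pt (L a0) k \<notin> X" if "b \<in> P" "\<bar>t b - k\<bar> = 1" "k < lo \<or> hi < k" for b k
  proof
    assume "pt (L a0) k \<in> X"
    moreover have "adj_axis d b (pt (L a0) k)"
      using P(3)[OF that(1)] that(2) by (simp add: adj_axis_coords)
    ultimately have "pt (L a0) k \<in> P" using P(5) that(1) by blast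
    with interval that(3) show False by simp
  qed
  from this[OF blo(1)] this[OF bhi(1)] blo(2) bhi(2)
  have "pt (L a0) (lo - 1) \<notin> X" "pt (L a0) (hi + 1) \<notin> X" by simp_all
  with interval P(2) X grid_frame_axioms show ?thesis
    by (auto simp: portal_segment_def portal_segment_axioms_def)
qed

context portal_segment
begin

lemma level_c_outside_segment:
  assumes "y \<in> X" "y \<notin> P" "L y = c"
  shows "t y < lo - 1 \<or> hi + 1 < t y"
proof (rule ccontr)
  assume "\<not> ?thesis"
  with assms(2,3) mem_P have "t y = lo - 1 \<or> t y = hi + 1" by auto
  with assms lo_end_notin hi_end_notin show False by (metis pt_L_t)
qed

lemma portal_neighbour_level:
  assumes "y \<in> X - P" "z \<in> P" "tadj y z"
  shows "L y = c + 1 \<or> L y = c - 1"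
proof -
  have "L z = c" "lo \<le> t z" "t z \<le> hi" using assms(2) mem_P by auto
  moreover have "L y = c \<Longrightarrow> t y < lo - 1 \<or> hi + 1 < t y"
    using assms(1) level_c_outside_segment by blast
  ultimately show ?thesis using assms(3) unfolding tadj_coords by auto
qed

lemma edge_count_crosses_ray_off_portal:
  assumes q: "is_walk (X - P) q a b" and "lo - 1 \<le> k" "k \<le> hi + 1"
  shows "edge_count (crosses_ray (pt c k)) q = edge_count (crosses_ray (pt c (hi + 1))) q"
proof (rule edge_count_cong)
  have "crosses_ray (pt c k) x y = crosses_ray (pt c (hi + 1)) x y"
    if "x \<in> set q" "y \<in> set q" for x y
  proof -
    have "x \<in> X - P" "y \<in> X - P" using that q by (auto simp: is_walk_iff)
    then show ?thesis
      using level_c_outside_segment[of x] level_c_outside_segment[of y] assms(2,3)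
      unfolding crosses_ray_def by auto
  qed
  then show "successively (\<lambda>x y. crosses_ray (pt c k) x y = crosses_ray (pt c (hi + 1)) x y) q"
    using q unfolding is_walk_iff by (blast intro: successively_mono)
qed

lemma portal_segment_neg:
  "portal_segment (\<lambda>z. - L z) (\<lambda>z. - t z) (\<lambda>l k. pt (- l) (- k)) X P (- c) (- hi) (- lo)"
  using grid_frame_neg finite_X no_holes_X mem_P P_subset_X lo_end_notin hi_end_notin
  by (auto simp: portal_segment_def portal_segment_axioms_def add.commute)

lemma detour_crossing_balance:
  assumes al: "al \<in> X - P" and be: "be \<in> X - P" and z1: "z1 \<in> P" and z2: "z2 \<in> P"
    and "tadj al z1" "tadj z2 be" and q: "is_walk (X - P) q be al" and "L al = c + 1"
    and s: "lo - 1 \<le> s" "s \<le> hi + 1" and hole: "pt c s \<notin> X \<or> pt (c + 1) s \<notin> X"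
  shows "s < t z1 \<longleftrightarrow> L be = c + 1 \<and> s < t z2"
proof -
  have z: "L z1 = c" "L z2 = c" "lo \<le> t z1" "t z1 \<le> hi" "lo \<le> t z2" "t z2 \<le> hi"
    using z1 z2 mem_P by auto
  define seg where "seg = row_between z1 z2"
  have seg: "is_walk P seg z1 z2"
    unfolding seg_def using z by (intro is_walk_row_between) (auto simp: mem_P)
  define g where "g = al # seg @ q"
  have g: "is_walk X g al al"
    using seg q al P_subset_X \<open>tadj al z1\<close> \<open>tadj z2 be\<close> unfolding g_def is_walk_iff
    by (auto simp: successively_append_iff successively_Cons)
  \<comment> \<open>The segment lies on level \<open>c\<close>, so only the two edges joining it to the detour can cross a ray.\<close>
  have count: "edge_count (crosses_ray w) g =
      of_bool (crosses_ray w al z1) + of_bool (crosses_ray w z2 be) + edge_count (crosses_ray w) q"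
    for w
  proof -
    have "L y = c" if "y \<in> set seg" for y
      using that seg mem_P unfolding is_walk_iff by blast
    then have "successively (\<lambda>a b. \<not> crosses_ray w a b) seg"
      using seg unfolding is_walk_iff crosses_ray_def by (auto elim!: successively_mono)
    then show ?thesis
      using seg q unfolding g_def is_walk_iff
      by (simp add: edge_count_Cons edge_count_append edge_count_eq_0)
  qed
  have "even (edge_count (crosses_ray (pt c (hi + 1))) q)"
    using even_crosses_ray_outside[OF finite_X no_holes_X g hi_end_notin] count z
    by (simp add: crosses_ray_def)
  moreover have "even (edge_count (crosses_ray (pt c s)) g)"
    using hole
  proof
    assume "pt (c + 1) s \<notin> X"
    moreover from this have "pt (c + 1) s \<notin> set g" using g by (auto simp: is_walk_iff)
    ultimately show ?thesis
      using even_crosses_ray_up[OF g, of "pt (c + 1) s" "pt c s"]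
        even_crosses_ray_outside[OF finite_X no_holes_X g] by simp
  qed (rule even_crosses_ray_outside[OF finite_X no_holes_X g])
  ultimately show ?thesis
    using count[of "pt c s"] edge_count_crosses_ray_off_portal[OF q s] z \<open>L al = c + 1\<close>
    by (auto simp: crosses_ray_def)
qed

lemma detour_ends_row:
  assumes al: "al \<in> X - P" and be: "be \<in> X - P" and z1: "z1 \<in> P" and z2: "z2 \<in> P"
    and adj: "tadj al z1" "tadj z2 be" and q: "is_walk (X - P) q be al" and "L al = c + 1"
  shows "L be = c + 1 \<and>
    (\<forall>y. L y = c + 1 \<and> min (t al) (t be) \<le> t y \<and> t y \<le> max (t al) (t be) \<longrightarrow> y \<in> X)"
proof -
  note balance = detour_crossing_balance[OF al be z1 z2 adj q \<open>L al = c + 1\<close>]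
  have z: "L z1 = c" "L z2 = c" "lo \<le> t z1" "t z1 \<le> hi" "lo \<le> t z2" "t z2 \<le> hi"
    using z1 z2 mem_P by auto
  have "L be = c + 1" using balance[of "lo - 1"] lo_end_notin z by auto
  have offsets: "t al = t z1 \<or> t al = t z1 - 1" "t be = t z2 \<or> t be = t z2 - 1"
    using adj \<open>L al = c + 1\<close> \<open>L be = c + 1\<close> z unfolding tadj_coords by auto
  have "y \<in> X"
    if y: "L y = c + 1" "min (t al) (t be) \<le> t y" "t y \<le> max (t al) (t be)" for y
  proof (rule ccontr)
    assume "y \<notin> X"
    then have "y \<noteq> al" "y \<noteq> be" using al be by auto
    then have "t y \<noteq> t al" "t y \<noteq> t be"
      using y(1) \<open>L al = c + 1\<close> \<open>L be = c + 1\<close> vertex_eq_iff by metis+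
    moreover have "pt (c + 1) (t y) \<notin> X" using \<open>y \<notin> X\<close> y(1) by (metis pt_L_t)
    ultimately show False
      using balance[of "t y"] y(2,3) z \<open>L be = c + 1\<close> offsets
      by (auto simp: min_def max_def split: if_splits)
  qed
  with \<open>L be = c + 1\<close> show ?thesis by blast
qed

lemma detour_shortcut:
  assumes al: "al \<in> X - P" and be: "be \<in> X - P" and z1: "z1 \<in> P" and z2: "z2 \<in> P"
    and adj: "tadj al z1" "tadj z2 be" and q: "is_walk (X - P) q be al"
  shows "\<exists>r. is_walk X r al be \<and> length r \<le> nat \<bar>t z1 - t z2\<bar> + 2"
proof -
  have "L al = c + 1 \<or> L al = c - 1" using portal_neighbour_level al z1 adj(1) by blast
  then obtain l where l: "L al = l" "L be = l" "l \<noteq> c"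
    and row: "\<And>y. L y = l \<Longrightarrow> min (t al) (t be) \<le> t y \<Longrightarrow> t y \<le> max (t al) (t be) \<Longrightarrow> y \<in> X"
  proof
    assume "L al = c + 1"
    then show thesis using detour_ends_row[OF assms] that[of "c + 1"] by auto
  next
    \<comment> \<open>The side below \<open>P\<close> is the side above \<open>P\<close> in the reflected frame.\<close>
    assume "L al = c - 1"
    then have "- L be = - c + 1 \<and> (\<forall>y. - L y = - c + 1 \<and>
        min (- t al) (- t be) \<le> - t y \<and> - t y \<le> max (- t al) (- t be) \<longrightarrow> y \<in> X)"
      using portal_segment.detour_ends_row[OF portal_segment_neg assms] by simp
    with \<open>L al = c - 1\<close> show thesis
      by (intro that[of "c - 1"]) (auto simp: min_def max_def split: if_splits)
  qed
  have walk: "is_walk X (row_between al be) al be"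
    using l row by (intro is_walk_row_between) auto
  have "L z1 = c" "L z2 = c" using z1 z2 mem_P by auto
  with adj[unfolded tadj_coords] l have "\<bar>t al - t be\<bar> \<le> \<bar>t z1 - t z2\<bar> + 1" by smt
  then have "length (row_between al be) \<le> nat \<bar>t z1 - t z2\<bar> + 2"
    unfolding length_row_between by linarith
  with walk show ?thesis by blast
qed

lemma portal_shortcut:
  assumes p: "is_walk X p u v" and "u \<notin> P" "v \<notin> P" "set p \<inter> P \<noteq> {}"
    and "connected_in tadj (X - P) u v"
  shows "\<exists>p'. is_walk X p' u v \<and> length p' < length p"
proof -
  obtain pre mid suf where p_split: "p = pre @ mid @ suf"
    and pre: "is_walk (X - P) pre u (last pre)" and mid: "is_walk X mid (hd mid) (last mid)"
    and suf: "is_walk (X - P) suf (hd suf) v" and "hd mid \<in> P" "last mid \<in> P"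
    and "tadj (last pre) (hd mid)" "tadj (last mid) (hd suf)"
    using is_walk_split_at_set[OF assms(1-4)] .
  obtain r where "is_walk (X - P) r u v"
    using \<open>connected_in tadj (X - P) u v\<close> connected_in_iff_walk by blast
  with pre suf have "is_walk (X - P) ((suf @ tl (rev r)) @ tl pre) (hd suf) (last pre)"
    by (blast intro: is_walk_join is_walk_rev)
  moreover have "last pre \<in> X - P" "hd suf \<in> X - P"
    using pre suf by (blast dest: is_walk_ends_mem)+
  ultimately obtain row where row: "is_walk X row (last pre) (hd suf)"
    "length row \<le> nat \<bar>t (hd mid) - t (last mid)\<bar> + 2"
    using detour_shortcut \<open>hd mid \<in> P\<close> \<open>last mid \<in> P\<close> \<open>tadj (last pre) (hd mid)\<close>
      \<open>tadj (last mid) (hd suf)\<close> by blast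
  with walk_t_diff_le[OF mid] have "length row \<le> length mid + 1" by linarith
  moreover have "row \<noteq> []" "suf \<noteq> []" using row(1) suf by (simp_all add: is_walk_iff)
  then have "length (pre @ tl (row @ tl suf)) + 2 = length pre + length row + length suf"
    by (cases row; cases suf) auto
  ultimately have "length (pre @ tl (row @ tl suf)) < length p"
    using p_split \<open>suf \<noteq> []\<close> by simp
  moreover have "is_walk X pre u (last pre)" "is_walk X suf (hd suf) v"
    using pre suf by (blast intro: is_walk_mono)+
  with row(1) have "is_walk X (pre @ tl (row @ tl suf)) u v"
    by (blast intro: is_walk_join)
  ultimately show ?thesis by blast
qed

end

theorem mainTheorem4:
  fixes X P :: "tvertex set" and u v :: tvertex and p :: "tvertex list"
  assumes "finite X"
    and "graph_connected X"
    and "no_holes X"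
    and "is_portal X P"
    and "u \<in> X - P" and "v \<in> X - P"
    and "is_shortest_path X p u v"
  shows "set p \<inter> P \<noteq> {} \<longleftrightarrow> \<not> connected_in tadj (X - P) u v"
proof -
  obtain d a0 where "a0 \<in> X" and "P = {b. connected_in (adj_axis d) X a0 b}"
    using \<open>is_portal X P\<close> unfolding is_portal_def by blast
  moreover obtain L t pt where "axis_frame L t pt d"
    using axis_frame_exists by blast
  ultimately obtain c lo hi where portal: "portal_segment L t pt X P c lo hi"
    using axis_frame.portal_segment_exists \<open>finite X\<close> \<open>no_holes X\<close> by blast
  have p: "is_walk X p u v" and shortest: "\<And>q. is_walk X q u v \<Longrightarrow> length p \<le> length q"
    using \<open>is_shortest_path X p u v\<close> unfolding is_shortest_path_def by auto
  show ?thesis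
  proof
    assume "set p \<inter> P \<noteq> {}"
    then show "\<not> connected_in tadj (X - P) u v"
      using portal_segment.portal_shortcut[OF portal p] \<open>u \<in> X - P\<close> \<open>v \<in> X - P\<close> shortest
      by (meson DiffD2 not_le)
  next
    assume "\<not> connected_in tadj (X - P) u v"
    then show "set p \<inter> P \<noteq> {}"
      using p unfolding connected_in_iff_walk is_walk_iff by blast
  qed
qed

end
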